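(* Let $\mathbb{F}\in\{\mathbb{R},\mathbb{C}\}$, $d=2$, $n\ge1$, let $a_{k,2}\in\mathbb{F}$ ($2\le k\le n$), and let $L_0,\dots,L_n\in\mathbb{F}[x_1,x_2]$ be defined by $L_0=1$, $L_1=x_1$ and, for $2\le k\le n$, $$L_k=\Psi_1(L_{k-1})+\Psi_2\Big(\Big(\sum_{t=2}^{k-1}a_{t,2}L_{k-t}\Big)_{i_1=0}\Big)+a_{k,2}x_2.$$ Let $\mathbf{z}_0\in\mathbb{F}^2$ and define $\mathbf{z}_0(h)=\mathbf{z}_0$, $\mathbf{z}_1(h)=\mathbf{z}_0+(h,0)$, and $$\mathbf{z}_i(h)=\mathbf{z}_0+\Big(ih,\ \sum_{j=2}^{i}i(i-1)\cdots(i-j+1)\,a_{j,2}h^j\Big),\qquad i=2,\dots,n.$$ With $A^{(m)}_k=(-1)^{m-k}\frac{1}{k!(m-k)!}$, for every function $f$ analytic at $\mathbf{z}_0$ and every $m=0,\dots,n$, $$(L_m(D)f)(\mathbf{z}_0)=\lim_{h\to0}\frac{1}{h^m}\sum_{i=0}^mA^{(m)}_i f(\mathbf{z}_i(h));$$ i.e. $\mathrm{span}\{\delta_{\mathbf{z}_0}\circ L_0(D),\dots,\delta_{\mathbf{z}_0}\circ L_n(D)\}=\lim_{h\to0}\mathrm{span}\{\delta_{\mathbf{z}_i(h)}:i=0,\dots,n\}$.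
   Context: $\Psi_j$ is the linear operator with $\Psi_j(x_1^{\alpha_1}x_2^{\alpha_2})=\frac{1}{\alpha_j+1}x_1^{\alpha_1}\cdots x_j^{\alpha_j+1}\cdots$ (raising the exponent of $x_j$ by one and dividing by the new exponent); $(M)_{i_1=0}$ is the sum of the terms of $M$ not containing $x_1$. For $p=\sum c_\alpha\mathbf{x}^\alpha$, $p(D)=\sum c_\alpha\partial^{|\alpha|}/\partial x_1^{\alpha_1}\partial x_2^{\alpha_2}$; $\delta_{\mathbf z}$ is evaluation at $\mathbf z$, and the limit of spans is understood via the pointwise limit formula. *)

theory Defs
  imports "HOL-Analysis.Analysis"
begin

text \<open>Polynomials in F[x1,x2] are represented by their coefficient functions
  (exponent pair (i,j) stands for the monomial x1^i x2^j).\<close>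
type_synonym 'a poly2 = "nat \<times> nat \<Rightarrow> 'a"

definition Psi1 :: "'a::field poly2 \<Rightarrow> 'a poly2" where
  "Psi1 p = (\<lambda>(i,j). if i = 0 then 0 else p (i - 1, j) / of_nat i)"

definition Psi2 :: "'a::field poly2 \<Rightarrow> 'a poly2" where
  "Psi2 p = (\<lambda>(i,j). if j = 0 then 0 else p (i, j - 1) / of_nat j)"

text \<open>(M)_{i1=0}: keep the terms not containing x1.\<close>
definition restr0 :: "'a::zero poly2 \<Rightarrow> 'a poly2" where
  "restr0 p = (\<lambda>(i,j). if i = 0 then p (i,j) else 0)"

definition mono2 :: "nat \<times> nat \<Rightarrow> 'a::{zero,one} poly2" where
  "mono2 e = (\<lambda>\<alpha>. if \<alpha> = e then 1 else 0)"

function Lpoly :: "(nat \<Rightarrow> 'a::field) \<Rightarrow> nat \<Rightarrow> 'a poly2" where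
  "Lpoly a 0 = mono2 (0,0)"
| "Lpoly a (Suc 0) = mono2 (1,0)"
| "Lpoly a (Suc (Suc k)) =
     (\<lambda>\<alpha>. Psi1 (Lpoly a (Suc k)) \<alpha>
        + Psi2 (restr0 (\<lambda>\<beta>. \<Sum>t\<in>{2..Suc k}. a t * Lpoly a (Suc (Suc k) - t) \<beta>)) \<alpha>
        + a (Suc (Suc k)) * mono2 (0,1) \<alpha>)"
  by pat_completeness auto
termination
  by (relation "Wellfounded.measure (\<lambda>(a,k). k)") auto

definition partial1 :: "('a::real_normed_field \<times> 'a \<Rightarrow> 'a) \<Rightarrow> 'a \<times> 'a \<Rightarrow> 'a" where
  "partial1 f = (\<lambda>(x,y). deriv (\<lambda>t. f (t, y)) x)"

definition partial2 :: "('a::real_normed_field \<times> 'a \<Rightarrow> 'a) \<Rightarrow> 'a \<times> 'a \<Rightarrow> 'a" where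
  "partial2 f = (\<lambda>(x,y). deriv (\<lambda>t. f (x, t)) y)"

definition pderiv2 :: "nat \<times> nat \<Rightarrow> ('a::real_normed_field \<times> 'a \<Rightarrow> 'a) \<Rightarrow> 'a \<times> 'a \<Rightarrow> 'a" where
  "pderiv2 e f = (partial1 ^^ fst e) ((partial2 ^^ snd e) f)"

text \<open>(p(D) f)(z) for a polynomial p (finite support).\<close>
definition polyD :: "'a::real_normed_field poly2 \<Rightarrow> ('a \<times> 'a \<Rightarrow> 'a) \<Rightarrow> 'a \<times> 'a \<Rightarrow> 'a" where
  "polyD p f z = (\<Sum>\<alpha>\<in>{\<alpha>. p \<alpha> \<noteq> 0}. p \<alpha> * pderiv2 \<alpha> f z)"

definition analytic2_at :: "('a::real_normed_field \<times> 'a \<Rightarrow> 'a) \<Rightarrow> 'a \<times> 'a \<Rightarrow> bool" where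
  "analytic2_at f z0 \<longleftrightarrow> (\<exists>r>0. \<exists>c :: nat \<times> nat \<Rightarrow> 'a. \<forall>x y.
     norm (x - fst z0) < r \<and> norm (y - snd z0) < r \<longrightarrow>
       (\<lambda>(i,j). c (i,j) * (x - fst z0) ^ i * (y - snd z0) ^ j) abs_summable_on UNIV \<and>
       ((\<lambda>(i,j). c (i,j) * (x - fst z0) ^ i * (y - snd z0) ^ j) has_sum f (x, y)) UNIV)"

definition znode :: "(nat \<Rightarrow> 'a::field) \<Rightarrow> 'a \<times> 'a \<Rightarrow> nat \<Rightarrow> 'a \<Rightarrow> 'a \<times> 'a" where
  "znode a z0 i h = (fst z0 + of_nat i * h,
      snd z0 + (\<Sum>j\<in>{2..i}. of_nat (\<Prod>l<j. i - l) * a j * h ^ j))"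

definition Acoef :: "nat \<Rightarrow> nat \<Rightarrow> 'a::field_char_0" where
  "Acoef m k = (-1) ^ (m - k) / (fact k * fact (m - k))"

end

theory Submission
  imports Defs "HOL-Computational_Algebra.Polynomial"
begin

(*
  Expand f around z0 as sum c_pq x^p y^q. Writing x = i h, the second coordinate of z_i(h)
  is P_h(x) = sum_j a_j x (x - h) ... (x - (j-1) h), a polynomial in x whose coefficients
  depend continuously on h and which tends to P(x) = sum_j a_j x^j as h -> 0. The weights
  A^(m)_i annihilate i^0, ..., i^(m-1) and send i^m to 1, so h^-m sum_i A_i g_h(i h) tends to
  the m-th coefficient of g_0 for every such family of polynomials g_h. Hence the monomial
  x^p y^q contributes the coefficient of x^(m-p) in P^q, while the Taylor remainder of order
  m+1 contributes nothing. Finally p! q! L_m(p,q) is exactly that coefficient, and the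
  corresponding partial derivative of f at z0 is p! q! c_pq.
*)

subsection \<open>Alternating power sums\<close>

text \<open>This is m! times the Stirling number of the second kind S(n, m).\<close>
definition alt_power_sum :: "nat \<Rightarrow> nat \<Rightarrow> int" where
  "alt_power_sum m n = (\<Sum>i\<le>m. (-1) ^ (m - i) * int (m choose i) * int i ^ n)"

lemma alt_power_sum_0_right: "alt_power_sum m 0 = (if m = 0 then 1 else 0)"
proof -
  have "alt_power_sum m 0 = (\<Sum>i\<le>m. int (m choose i) * 1 ^ i * (-1) ^ (m - i))"
    unfolding alt_power_sum_def by (intro sum.cong) auto
  also have "\<dots> = (1 + (-1)) ^ m"
    unfolding binomial_ring by simp
  finally show ?thesis by simp
qed

lemma alt_power_sum_Suc_Suc:
  "alt_power_sum (Suc m) (Suc n) = int (Suc m) * (\<Sum>r\<le>n. int (n choose r) * alt_power_sum m r)"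
proof -
  have "alt_power_sum (Suc m) (Suc n)
      = (\<Sum>k\<le>m. (-1) ^ (Suc m - Suc k) * int (Suc m choose Suc k) * int (Suc k) ^ Suc n)"
    unfolding alt_power_sum_def by (subst sum.atMost_Suc_shift) simp
  also have "\<dots> = (\<Sum>k\<le>m. int (Suc m) * ((-1) ^ (m - k) * int (m choose k) * (int k + 1) ^ n))"
  proof (intro sum.cong refl)
    fix k
    have binom: "int (Suc k) * int (Suc m choose Suc k) = int (Suc m) * int (m choose k)"
      using Suc_times_binomial[of k m] by (metis of_nat_mult)
    have "(-1) ^ (Suc m - Suc k) * int (Suc m choose Suc k) * int (Suc k) ^ Suc n
        = (-1) ^ (m - k) * (int (Suc k) * int (Suc m choose Suc k)) * int (Suc k) ^ n"
      by (simp add: algebra_simps)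
    then show "(-1) ^ (Suc m - Suc k) * int (Suc m choose Suc k) * int (Suc k) ^ Suc n
        = int (Suc m) * ((-1) ^ (m - k) * int (m choose k) * (int k + 1) ^ n)"
      unfolding binom by (simp add: algebra_simps)
  qed
  also have "\<dots> = int (Suc m) * (\<Sum>k\<le>m. (-1) ^ (m - k) * int (m choose k)
                                      * (\<Sum>r\<le>n. int (n choose r) * int k ^ r))"
    by (simp add: sum_distrib_left binomial_ring)
  also have "\<dots> = int (Suc m) * (\<Sum>k\<le>m. \<Sum>r\<le>n.
                     int (n choose r) * ((-1) ^ (m - k) * int (m choose k) * int k ^ r))"
    by (simp add: sum_distrib_left algebra_simps)
  also have "\<dots> = int (Suc m) * (\<Sum>r\<le>n. int (n choose r) * alt_power_sum m r)"
    unfolding alt_power_sum_def by (subst sum.swap) (simp add: sum_distrib_left)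
  finally show ?thesis .
qed

lemma alt_power_sum_eq_0: "n < m \<Longrightarrow> alt_power_sum m n = 0"
proof (induction n arbitrary: m rule: less_induct)
  case (less n)
  show ?case
  proof (cases n)
    case 0
    then show ?thesis
      using less.prems by (simp add: alt_power_sum_0_right)
  next
    case (Suc n')
    moreover obtain m' where "m = Suc m'"
      using less.prems by (cases m) auto
    ultimately show ?thesis
      using less by (simp add: alt_power_sum_Suc_Suc)
  qed
qed

lemma alt_power_sum_diag: "alt_power_sum n n = fact n"
proof (induction n)
  case 0
  then show ?case by (simp add: alt_power_sum_0_right)
next
  case (Suc n)
  have "(\<Sum>r\<le>n. int (n choose r) * alt_power_sum n r) = (\<Sum>r\<in>{n}. int (n choose r) * alt_power_sum n r)"
    by (rule sum.mono_neutral_right) (auto simp: alt_power_sum_eq_0)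
  then show ?case
    by (simp add: alt_power_sum_Suc_Suc Suc.IH)
qed

definition Acoef_moment :: "nat \<Rightarrow> nat \<Rightarrow> 'a::field_char_0" where
  "Acoef_moment m n = (\<Sum>i\<le>m. Acoef m i * of_nat i ^ n)"

lemma Acoef_moment_eq:
  assumes "n \<le> m"
  shows "Acoef_moment m n = (if n = m then 1 else 0)"
proof -
  have "Acoef_moment m n = of_int (alt_power_sum m n) / fact m"
    unfolding Acoef_moment_def alt_power_sum_def Acoef_def of_int_sum
    by (auto simp: sum_divide_distrib binomial_fact intro!: sum.cong)
  also have "\<dots> = (if n = m then 1 else 0)"
    using assms by (simp add: alt_power_sum_eq_0 alt_power_sum_diag)
  finally show ?thesis .
qed

subsection \<open>The coefficients of the polynomials L_k\<close>

definition curve_poly :: "(nat \<Rightarrow> 'a::comm_ring_1) \<Rightarrow> nat \<Rightarrow> 'a poly" where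
  "curve_poly a N = (\<Sum>j\<in>{2..N}. monom (a j) j)"

lemma coeff_curve_poly: "coeff (curve_poly a N) t = (if 2 \<le> t \<and> t \<le> N then a t else 0)"
  unfolding curve_poly_def coeff_sum coeff_monom
  by (cases "2 \<le> t \<and> t \<le> N") (auto intro: sum.neutral)

lemma coeff_curve_poly_power_eq_0: "k < 2 * q \<Longrightarrow> coeff (curve_poly a N ^ q) k = 0"
proof (induction q arbitrary: k)
  case 0
  then show ?case by simp
next
  case (Suc q)
  have "coeff (curve_poly a N) t * coeff (curve_poly a N ^ q) (k - t) = 0" if "t \<le> k" for t
    using Suc that by (cases "t < 2") (auto simp: coeff_curve_poly)
  then show ?case
    by (simp add: coeff_mult)
qed

lemma coeff_curve_poly_power_Suc:
  assumes "Suc (Suc k) \<le> N"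
  shows "coeff (curve_poly a N ^ Suc q) (Suc (Suc k))
       = (\<Sum>t\<in>{2..Suc k}. a t * coeff (curve_poly a N ^ q) (Suc (Suc k) - t))
         + (if q = 0 then a (Suc (Suc k)) else 0)"
proof -
  let ?k = "Suc (Suc k)"
  have "coeff (curve_poly a N ^ Suc q) ?k
      = (\<Sum>t\<le>?k. coeff (curve_poly a N) t * coeff (curve_poly a N ^ q) (?k - t))"
    by (simp add: coeff_mult)
  also have "\<dots> = (\<Sum>t\<in>{2..?k}. coeff (curve_poly a N) t * coeff (curve_poly a N ^ q) (?k - t))"
    by (rule sum.mono_neutral_right) (auto simp: coeff_curve_poly)
  also have "\<dots> = (\<Sum>t\<in>{2..?k}. a t * coeff (curve_poly a N ^ q) (?k - t))"
    using assms by (intro sum.cong) (auto simp: coeff_curve_poly)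
  also have "\<dots> = (\<Sum>t\<in>{2..Suc k}. a t * coeff (curve_poly a N ^ q) (?k - t))
                 + (if q = 0 then a ?k else 0)"
    by (cases "q = 0") (auto simp: atLeastAtMostSuc_conv coeff_curve_poly_power_eq_0 intro!: sum.neutral)
  finally show ?thesis .
qed

lemma fact_mult_Lpoly_Suc_Suc_at_Suc_x1:
  fixes a :: "nat \<Rightarrow> 'a::field_char_0"
  shows "fact (Suc p) * fact q * Lpoly a (Suc (Suc k)) (Suc p, q) = fact p * fact q * Lpoly a (Suc k) (p, q)"
proof -
  have "Lpoly a (Suc (Suc k)) (Suc p, q) = Lpoly a (Suc k) (p, q) / of_nat (Suc p)"
    by (simp add: Psi1_def Psi2_def restr0_def mono2_def)
  then show ?thesis
    unfolding fact_Suc by (simp del: of_nat_Suc Lpoly.simps)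
qed

lemma fact_mult_Lpoly_Suc_Suc_at_Suc_x2:
  fixes a :: "nat \<Rightarrow> 'a::field_char_0"
  shows "fact (Suc q) * Lpoly a (Suc (Suc k)) (0, Suc q)
       = (\<Sum>t\<in>{2..Suc k}. a t * (fact q * Lpoly a (Suc (Suc k) - t) (0, q)))
         + (if q = 0 then a (Suc (Suc k)) else 0)"
proof -
  have "Lpoly a (Suc (Suc k)) (0, Suc q)
      = (\<Sum>t\<in>{2..Suc k}. a t * Lpoly a (Suc (Suc k) - t) (0, q)) / of_nat (Suc q)
        + (if q = 0 then a (Suc (Suc k)) else 0)"
    by (simp add: Psi1_def Psi2_def restr0_def mono2_def)
  then show ?thesis
    unfolding fact_Suc by (simp add: sum_distrib_left algebra_simps del: of_nat_Suc Lpoly.simps)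
qed

lemma Lpoly_Suc_Suc_at_0: "Lpoly a (Suc (Suc k)) (0, 0) = 0"
  by (simp add: Psi1_def Psi2_def restr0_def mono2_def)

lemma fact_mult_Lpoly_le_1:
  fixes a :: "nat \<Rightarrow> 'a::field_char_0"
  assumes "k \<le> 1"
  shows "fact p * fact q * Lpoly a k (p, q)
       = (if p \<le> k then coeff (curve_poly a N ^ q) (k - p) else 0)"
proof (cases k)
  case 0
  then show ?thesis
    using coeff_curve_poly_power_eq_0[of 0 q a N] by (simp add: mono2_def)
next
  case (Suc k')
  then have "k = 1"
    using assms by simp
  then show ?thesis
    using coeff_curve_poly_power_eq_0[of 1 q a N] coeff_curve_poly_power_eq_0[of 0 q a N]
    by (cases p; cases q) (auto simp: mono2_def)
qed

lemma fact_mult_Lpoly: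
  fixes a :: "nat \<Rightarrow> 'a::field_char_0"
  assumes "k \<le> N"
  shows "fact p * fact q * Lpoly a k (p, q)
       = (if p \<le> k then coeff (curve_poly a N ^ q) (k - p) else 0)"
  using assms
proof (induction k arbitrary: p q rule: less_induct)
  case (less k)
  consider "k \<le> 1" | k' where "k = Suc (Suc k')"
    by (cases k; cases "k - 1") auto
  then show ?case
  proof cases
    case 1
    then show ?thesis
      by (rule fact_mult_Lpoly_le_1)
  next
    case k: 2
    consider p' where "p = Suc p'" | "p = 0" "q = 0" | q' where "p = 0" "q = Suc q'"
      by (metis not0_implies_Suc)
    then show ?thesis
    proof cases
      case 1
      then show ?thesis
        using fact_mult_Lpoly_Suc_Suc_at_Suc_x1[of p' q a k'] less.IH[of "Suc k'" p' q] less.prems k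
        by (simp del: Lpoly.simps)
    next
      case 2
      then show ?thesis
        unfolding k by (simp add: Lpoly_Suc_Suc_at_0 del: Lpoly.simps)
    next
      case (3 q')
      have IH: "fact q' * Lpoly a (k - t) (0, q') = coeff (curve_poly a N ^ q') (k - t)"
        if "t \<in> {2..Suc k'}" for t
        using less.IH[of "k - t" 0 q'] less.prems that k by (simp del: Lpoly.simps)
      have "fact p * fact q * Lpoly a k (p, q)
          = (\<Sum>t\<in>{2..Suc k'}. a t * (fact q' * Lpoly a (k - t) (0, q'))) + (if q' = 0 then a k else 0)"
        using fact_mult_Lpoly_Suc_Suc_at_Suc_x2[of q' a k'] 3 k by (simp del: Lpoly.simps)
      also have "\<dots> = coeff (curve_poly a N ^ q) k"
        using IH coeff_curve_poly_power_Suc[of k' N a q'] less.prems 3 k by simp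
      finally show ?thesis
        using 3 by simp
    qed
  qed
qed

subsection \<open>Finite differences of polynomial families\<close>

definition coeffs_isCont :: "('a::t2_space \<Rightarrow> 'b::real_normed_field poly) \<Rightarrow> 'a \<Rightarrow> bool" where
  "coeffs_isCont \<Phi> x \<longleftrightarrow> (\<forall>n. isCont (\<lambda>h. coeff (\<Phi> h) n) x)"

lemma coeffs_isCont_const: "coeffs_isCont (\<lambda>h. p) x"
  by (simp add: coeffs_isCont_def)

lemma coeffs_isCont_pCons:
  "isCont g x \<Longrightarrow> coeffs_isCont \<Phi> x \<Longrightarrow> coeffs_isCont (\<lambda>h. pCons (g h) (\<Phi> h)) x"
  unfolding coeffs_isCont_def
proof (intro allI)
  fix n
  assume "isCont g x" "\<forall>n. isCont (\<lambda>h. coeff (\<Phi> h) n) x"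
  then show "isCont (\<lambda>h. coeff (pCons (g h) (\<Phi> h)) n) x"
    by (cases n) auto
qed

lemma coeffs_isCont_smult: "coeffs_isCont \<Phi> x \<Longrightarrow> coeffs_isCont (\<lambda>h. smult c (\<Phi> h)) x"
  by (simp add: coeffs_isCont_def)

lemma coeffs_isCont_mult:
  "coeffs_isCont \<Phi> x \<Longrightarrow> coeffs_isCont \<Psi> x \<Longrightarrow> coeffs_isCont (\<lambda>h. \<Phi> h * \<Psi> h) x"
  unfolding coeffs_isCont_def coeff_mult by (intro allI isCont_sum ballI isCont_mult) auto

lemma coeffs_isCont_power: "coeffs_isCont \<Phi> x \<Longrightarrow> coeffs_isCont (\<lambda>h. \<Phi> h ^ q) x"
  by (induction q) (auto intro: coeffs_isCont_mult coeffs_isCont_const)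

lemma coeffs_isCont_sum:
  "(\<And>j. j \<in> A \<Longrightarrow> coeffs_isCont (\<Phi> j) x) \<Longrightarrow> coeffs_isCont (\<lambda>h. \<Sum>j\<in>A. \<Phi> j h) x"
  unfolding coeffs_isCont_def coeff_sum by (intro allI isCont_sum ballI) auto

lemma coeffs_isCont_prod:
  "finite A \<Longrightarrow> (\<And>j. j \<in> A \<Longrightarrow> coeffs_isCont (\<Phi> j) x) \<Longrightarrow> coeffs_isCont (\<lambda>h. \<Prod>j\<in>A. \<Phi> j h) x"
  by (induction A rule: finite_induct) (auto intro: coeffs_isCont_mult coeffs_isCont_const)

lemma finite_difference_poly_eq:
  fixes p :: "'a::field_char_0 poly"
  assumes "degree p \<le> D" "m \<le> D" "h \<noteq> 0"
  shows "(1 / h ^ m) * (\<Sum>i\<le>m. Acoef m i * poly p (of_nat i * h))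
       = (\<Sum>n\<le>D. coeff p n * h ^ (n - m) * Acoef_moment m n)"
proof -
  have "poly p x = (\<Sum>n\<le>D. coeff p n * x ^ n)" for x
    unfolding poly_altdef using assms(1)
    by (intro sum.mono_neutral_left) (auto simp: coeff_eq_0)
  then have "(\<Sum>i\<le>m. Acoef m i * poly p (of_nat i * h))
      = (\<Sum>i\<le>m. \<Sum>n\<le>D. coeff p n * h ^ n * (Acoef m i * of_nat i ^ n))"
    by (simp add: sum_distrib_left power_mult_distrib algebra_simps)
  also have "\<dots> = (\<Sum>n\<le>D. coeff p n * h ^ n * Acoef_moment m n)"
    unfolding Acoef_moment_def by (subst sum.swap) (simp add: sum_distrib_left)
  also have "\<dots> = (\<Sum>n\<le>D. h ^ m * (coeff p n * h ^ (n - m) * Acoef_moment m n))"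
  proof (intro sum.cong refl)
    fix n
    show "coeff p n * h ^ n * Acoef_moment m n = h ^ m * (coeff p n * h ^ (n - m) * Acoef_moment m n)"
    proof (cases "n < m")
      case True
      then show ?thesis by (simp add: Acoef_moment_eq)
    next
      case False
      then have "h ^ n = h ^ m * h ^ (n - m)"
        by (simp flip: power_add)
      then show ?thesis by simp
    qed
  qed
  finally show ?thesis
    using assms(3) by (simp add: sum_distrib_left)
qed

lemma finite_difference_tendsto_coeff:
  fixes \<Phi> :: "'a::real_normed_field \<Rightarrow> 'a poly"
  assumes cont: "coeffs_isCont \<Phi> 0" and deg: "\<And>h. degree (\<Phi> h) \<le> D"
  shows "((\<lambda>h. (1 / h ^ m) * (\<Sum>i\<le>m. Acoef m i * poly (\<Phi> h) (of_nat i * h)))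
           \<longlongrightarrow> coeff (\<Phi> 0) m) (at 0)"
proof -
  define g where "g h = (\<Sum>n\<le>max D m. coeff (\<Phi> h) n * h ^ (n - m) * Acoef_moment m n)" for h
  have "g h = (1 / h ^ m) * (\<Sum>i\<le>m. Acoef m i * poly (\<Phi> h) (of_nat i * h))" if "h \<noteq> 0" for h
    unfolding g_def using deg[of h] that by (intro finite_difference_poly_eq [symmetric]) auto
  then have eq: "\<forall>\<^sub>F h in at 0. g h = (1 / h ^ m) * (\<Sum>i\<le>m. Acoef m i * poly (\<Phi> h) (of_nat i * h))"
    by (auto simp: eventually_at_filter)
  have "isCont g 0"
    using cont unfolding g_def coeffs_isCont_def by (intro continuous_intros) auto
  then have lim: "(g \<longlongrightarrow> g 0) (at 0)"
    by (simp add: isCont_def)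
  have "g 0 = coeff (\<Phi> 0) m"
  proof -
    have "coeff (\<Phi> 0) n * 0 ^ (n - m) * Acoef_moment m n = 0" if "n \<noteq> m" for n
      using that by (cases "n < m") (simp_all add: Acoef_moment_eq)
    then have "g 0 = (\<Sum>n\<in>{m}. coeff (\<Phi> 0) n * 0 ^ (n - m) * Acoef_moment m n)"
      unfolding g_def by (intro sum.mono_neutral_right) auto
    then show ?thesis
      by (simp add: Acoef_moment_eq)
  qed
  then show ?thesis
    using Lim_transform_eventually[OF lim eq] by simp
qed

subsection \<open>The nodes z_i(h) as values of a polynomial family\<close>

text \<open>Truncated subtraction is harmless here: for j > i both products contain a zero factor.\<close>
lemma of_nat_prod_diff: "of_nat (\<Prod>l<j. i - l) = (\<Prod>l<j. of_nat i - of_nat l :: 'a::comm_ring_1)"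
proof (cases "j \<le> i")
  case True
  then show ?thesis by (simp add: of_nat_prod of_nat_diff)
next
  case False
  then have "i \<in> {..<j}" by simp
  then have "(\<Prod>l<j. i - l) = 0" and "(\<Prod>l<j. of_nat i - of_nat l :: 'a) = 0"
    by (auto intro!: prod_zero)
  then show ?thesis by (metis of_nat_0)
qed

text \<open>
  Evaluated at x = i h, the factor x (x - h) \<dots> (x - (j-1) h) equals i (i-1) \<dots> (i-j+1) h^j,
  so this polynomial in x interpolates the second coordinates of the nodes.
\<close>
definition node_curve :: "(nat \<Rightarrow> 'a::comm_ring_1) \<Rightarrow> nat \<Rightarrow> 'a \<Rightarrow> 'a poly" where
  "node_curve a N h = (\<Sum>j\<in>{2..N}. smult (a j) (\<Prod>l<j. [:- (of_nat l * h), 1:]))"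

lemma poly_node_curve:
  fixes a :: "nat \<Rightarrow> 'a::field"
  assumes "i \<le> N"
  shows "poly (node_curve a N h) (of_nat i * h) = snd (znode a (0, 0) i h)"
proof -
  have factor: "(\<Prod>l<j. poly [:- (of_nat l * h), 1:] (of_nat i * h)) = of_nat (\<Prod>l<j. i - l) * h ^ j"
    for j
  proof -
    have "(\<Prod>l<j. poly [:- (of_nat l * h), 1:] (of_nat i * h)) = (\<Prod>l<j. h * (of_nat i - of_nat l))"
      by (intro prod.cong) (auto simp: algebra_simps)
    also have "\<dots> = h ^ j * (\<Prod>l<j. of_nat i - of_nat l)"
      by (simp add: prod.distrib)
    finally show ?thesis
      unfolding of_nat_prod_diff by (simp only: mult.commute)
  qed
  have vanish: "of_nat (\<Prod>l<j. i - l) * a j * h ^ j = 0" if "j \<in> {2..N} - {2..i}" for j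
  proof -
    from that have "i \<in> {..<j}" by auto
    then have "(\<Prod>l<j. i - l) = 0" by (auto intro!: prod_zero)
    then show ?thesis by (metis mult_zero_left of_nat_0)
  qed
  have "poly (node_curve a N h) (of_nat i * h)
      = (\<Sum>j\<in>{2..N}. a j * (\<Prod>l<j. poly [:- (of_nat l * h), 1:] (of_nat i * h)))"
    by (simp only: node_curve_def poly_sum poly_smult poly_prod)
  also have "\<dots> = (\<Sum>j\<in>{2..N}. of_nat (\<Prod>l<j. i - l) * a j * h ^ j)"
    unfolding factor by (simp only: ac_simps)
  also have "\<dots> = (\<Sum>j\<in>{2..i}. of_nat (\<Prod>l<j. i - l) * a j * h ^ j)"
    using assms vanish by (intro sum.mono_neutral_right) auto
  finally show ?thesis
    by (simp add: znode_def)
qed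

lemma degree_node_curve_le: "degree (node_curve a N h) \<le> N"
  unfolding node_curve_def
proof (rule degree_sum_le)
  fix j assume j: "j \<in> {2..N}"
  have "degree (\<Prod>l<j. [:- (of_nat l * h), 1:]) \<le> (\<Sum>l<j. degree [:- (of_nat l * h), 1:])"
    using degree_prod_sum_le[of "{..<j}" "\<lambda>l. [:- (of_nat l * h), 1:]"] by (simp add: o_def)
  then have "degree (\<Prod>l<j. [:- (of_nat l * h), 1:]) \<le> N"
    using j by simp
  then show "degree (smult (a j) (\<Prod>l<j. [:- (of_nat l * h), 1:])) \<le> N"
    using degree_smult_le order_trans by blast
qed simp

lemma node_curve_0: "node_curve a N 0 = curve_poly a N"
  by (simp add: node_curve_def curve_poly_def monom_altdef smult_monom)

lemma coeffs_isCont_node_curve: "coeffs_isCont (node_curve a N) x"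
  unfolding node_curve_def [abs_def]
  by (intro coeffs_isCont_sum coeffs_isCont_smult coeffs_isCont_prod coeffs_isCont_pCons
      coeffs_isCont_const continuous_intros finite_lessThan)

lemma node_monomial_tendsto:
  fixes a :: "nat \<Rightarrow> 'a::real_normed_field"
  shows "((\<lambda>h. (1 / h ^ m) *
              (\<Sum>i\<le>m. Acoef m i * (fst (znode a (0, 0) i h) ^ p * snd (znode a (0, 0) i h) ^ q)))
          \<longlongrightarrow> (if p \<le> m then coeff (curve_poly a m ^ q) (m - p) else 0)) (at 0)"
proof -
  define \<Phi> where "\<Phi> h = monom 1 p * node_curve a m h ^ q" for h
  have "coeffs_isCont \<Phi> 0"
    unfolding \<Phi>_def [abs_def]
    by (intro coeffs_isCont_mult coeffs_isCont_power coeffs_isCont_const coeffs_isCont_node_curve)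
  moreover have "degree (\<Phi> h) \<le> p + m * q" for h
    unfolding \<Phi>_def
    by (meson add_le_mono degree_monom_le degree_mult_le degree_node_curve_le degree_power_le
        le_trans mult_le_mono1)
  ultimately have "((\<lambda>h. (1 / h ^ m) * (\<Sum>i\<le>m. Acoef m i * poly (\<Phi> h) (of_nat i * h)))
                     \<longlongrightarrow> coeff (\<Phi> 0) m) (at 0)"
    by (rule finite_difference_tendsto_coeff)
  moreover have "poly (\<Phi> h) (of_nat i * h) = fst (znode a (0, 0) i h) ^ p * snd (znode a (0, 0) i h) ^ q"
    if "i \<le> m" for i h
    using that by (simp add: \<Phi>_def poly_monom poly_node_curve) (simp add: znode_def)
  moreover have "coeff (\<Phi> 0) m = (if p \<le> m then coeff (curve_poly a m ^ q) (m - p) else 0)"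
    by (simp add: \<Phi>_def node_curve_0 coeff_monom_mult)
  ultimately show ?thesis
    by simp
qed

lemma norm_snd_znode_le:
  fixes a :: "nat \<Rightarrow> 'a::real_normed_field"
  assumes "norm h \<le> 1"
  shows "norm (snd (znode a z0 i h) - snd z0) \<le> (\<Sum>j\<in>{2..i}. norm (of_nat (\<Prod>l<j. i - l) * a j)) * norm h"
proof -
  have "norm (snd (znode a z0 i h) - snd z0) \<le> (\<Sum>j\<in>{2..i}. norm (of_nat (\<Prod>l<j. i - l) * a j * h ^ j))"
    by (simp add: znode_def norm_sum)
  also have "\<dots> \<le> (\<Sum>j\<in>{2..i}. norm (of_nat (\<Prod>l<j. i - l) * a j) * norm h)"
  proof (rule sum_mono)
    fix j assume "j \<in> {2..i}"
    then have "norm h ^ j \<le> norm h ^ 1"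
      using assms by (intro power_decreasing) auto
    then show "norm (of_nat (\<Prod>l<j. i - l) * a j * h ^ j) \<le> norm (of_nat (\<Prod>l<j. i - l) * a j) * norm h"
      by (simp add: norm_mult norm_power mult_left_mono)
  qed
  finally show ?thesis
    by (simp add: sum_distrib_right)
qed

lemma znode_norm_le:
  fixes a :: "nat \<Rightarrow> 'a::real_normed_field"
  obtains B :: real where "B > 0"
    and "\<And>i h. i \<le> m \<Longrightarrow> norm h \<le> 1 \<Longrightarrow> norm (fst (znode a z0 i h) - fst z0) \<le> B * norm h"
    and "\<And>i h. i \<le> m \<Longrightarrow> norm h \<le> 1 \<Longrightarrow> norm (snd (znode a z0 i h) - snd z0) \<le> B * norm h"
proof -
  define w where "w i = (\<Sum>j\<in>{2..i}. norm (of_nat (\<Prod>l<j. i - l) * a j))" for i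
  define C where "C = (\<Sum>i\<le>m. w i)"
  have w_nonneg: "0 \<le> w i" for i
    unfolding w_def by (intro sum_nonneg) auto
  have C: "0 \<le> w i" "w i \<le> C" if "i \<le> m" for i
    unfolding C_def using that w_nonneg by (auto intro: member_le_sum)
  show ?thesis
  proof (rule that[of "real m + C + 1"])
    show "real m + C + 1 > 0"
      using C[of 0] by simp
    fix i and h :: 'a assume i: "i \<le> m" and h: "norm h \<le> 1"
    have "norm (fst (znode a z0 i h) - fst z0) = real i * norm h"
      by (simp add: znode_def norm_mult)
    also have "\<dots> \<le> (real m + C + 1) * norm h"
      using i C[OF i] by (intro mult_right_mono) auto
    finally show "norm (fst (znode a z0 i h) - fst z0) \<le> (real m + C + 1) * norm h" .
    have "norm (snd (znode a z0 i h) - snd z0) \<le> w i * norm h"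
      using norm_snd_znode_le[OF h] by (simp add: w_def)
    also have "\<dots> \<le> (real m + C + 1) * norm h"
      using i C[OF i] by (intro mult_right_mono) auto
    finally show "norm (snd (znode a z0 i h) - snd z0) \<le> (real m + C + 1) * norm h" .
  qed
qed

subsection \<open>Power series in one variable\<close>

lemma fact_mult_diffs_funpow:
  "fact n * (diffs ^^ k) b n = fact (n + k) * (b (n + k) :: 'a::real_normed_field)"
proof (induction k arbitrary: n)
  case 0
  then show ?case by simp
next
  case (Suc k)
  have "fact n * (diffs ^^ Suc k) b n = fact n * of_nat (Suc n) * (diffs ^^ k) b (Suc n)"
    by (simp add: diffs_def)
  also have "fact n * of_nat (Suc n) = (fact (Suc n) :: 'a)"
    by (simp add: algebra_simps)
  also have "fact (Suc n) * (diffs ^^ k) b (Suc n) = fact (Suc n + k) * b (Suc n + k)"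
    by (rule Suc.IH)
  finally show ?case by simp
qed

lemma powser_sums_deriv_funpow:
  fixes g :: "'a::{real_normed_field,banach} \<Rightarrow> 'a"
  assumes "\<And>s. norm (s - s0) < R \<Longrightarrow> (\<lambda>n. b n * (s - s0) ^ n) sums g s"
  shows "norm (s - s0) < R \<Longrightarrow> (\<lambda>n. (diffs ^^ k) b n * (s - s0) ^ n) sums (deriv ^^ k) g s"
proof (induction k arbitrary: s)
  case 0
  then show ?case using assms by simp
next
  case (Suc k)
  define d where "d = (diffs ^^ k) b"
  have summable: "summable (\<lambda>n. d n * z ^ n)" if "norm z < R" for z
    using Suc.IH[of "z + s0"] that by (simp add: d_def sums_summable)
  have eq: "(\<Sum>n. d n * (t - s0) ^ n) = (deriv ^^ k) g t" if "t \<in> ball s0 R" for t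
    using Suc.IH[of t] that by (simp add: d_def sums_iff dist_norm norm_minus_commute)
  have outer: "((\<lambda>z. \<Sum>n. d n * z ^ n) has_field_derivative (\<Sum>n. diffs d n * (s - s0) ^ n)) (at (s - s0))"
    by (rule termdiffs_strong'[OF summable Suc.prems])
  have inner: "((\<lambda>t. t - s0) has_field_derivative 1) (at s)"
    by (auto intro!: derivative_eq_intros)
  have shifted: "((\<lambda>t. \<Sum>n. d n * (t - s0) ^ n) has_field_derivative (\<Sum>n. diffs d n * (s - s0) ^ n)) (at s)"
    using DERIV_chain2[OF outer inner] by simp
  have "((deriv ^^ k) g has_field_derivative (\<Sum>n. diffs d n * (s - s0) ^ n)) (at s)"
    by (rule has_field_derivative_transform_within_open[OF shifted open_ball, of s0 R])
       (use Suc.prems eq in \<open>auto simp: dist_norm norm_minus_commute\<close>)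
  then have "(deriv ^^ Suc k) g s = (\<Sum>n. diffs d n * (s - s0) ^ n)"
    using DERIV_imp_deriv by simp
  moreover have "summable (\<lambda>n. diffs d n * (s - s0) ^ n)"
    by (rule termdiff_converges[OF Suc.prems summable])
  ultimately show ?case
    by (simp add: d_def summable_sums)
qed

lemma deriv_funpow_powser_centre:
  fixes g :: "'a::{real_normed_field,banach} \<Rightarrow> 'a"
  assumes "R > 0" and "\<And>s. norm (s - s0) < R \<Longrightarrow> (\<lambda>n. b n * (s - s0) ^ n) sums g s"
  shows "(deriv ^^ k) g s0 = fact k * b k"
proof -
  have "(\<lambda>n. (diffs ^^ k) b n * (s0 - s0) ^ n) sums (deriv ^^ k) g s0"
    by (rule powser_sums_deriv_funpow) (use assms in auto)
  then have "(deriv ^^ k) g s0 = (diffs ^^ k) b 0"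
    using powser_sums_zero[of "(diffs ^^ k) b"] by (simp add: sums_unique2)
  then show ?thesis
    using fact_mult_diffs_funpow[of 0 k b] by simp
qed

lemma funpow_partial1: "(partial1 ^^ p) f (x, y) = (deriv ^^ p) (\<lambda>t. f (t, y)) x"
proof (induction p arbitrary: x)
  case (Suc p)
  have "(partial1 ^^ Suc p) f (x, y) = deriv (\<lambda>t. (partial1 ^^ p) f (t, y)) x"
    by (simp add: partial1_def)
  also have "(\<lambda>t. (partial1 ^^ p) f (t, y)) = (deriv ^^ p) (\<lambda>t. f (t, y))"
    using Suc.IH by auto
  finally show ?case by simp
qed simp

lemma funpow_partial2: "(partial2 ^^ q) f (x, y) = (deriv ^^ q) (\<lambda>s. f (x, s)) y"
proof (induction q arbitrary: y)
  case (Suc q)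
  have "(partial2 ^^ Suc q) f (x, y) = deriv (\<lambda>t. (partial2 ^^ q) f (x, t)) y"
    by (simp add: partial2_def)
  also have "(\<lambda>t. (partial2 ^^ q) f (x, t)) = (deriv ^^ q) (\<lambda>s. f (x, s))"
    using Suc.IH by auto
  finally show ?case by simp
qed simp

subsection \<open>Double power series\<close>

definition exponents_upto :: "nat \<Rightarrow> (nat \<times> nat) set" where
  "exponents_upto m = {\<alpha>. fst \<alpha> + snd \<alpha> \<le> m}"

lemma finite_exponents_upto: "finite (exponents_upto m)"
proof (rule finite_subset)
  show "exponents_upto m \<subseteq> {..m} \<times> {..m}"
    by (auto simp: exponents_upto_def)
qed simp

locale double_power_series =
  fixes f :: "'a::{real_normed_field,banach} \<times> 'a \<Rightarrow> 'a" and x0 y0 :: 'a and r :: real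
    and c :: "nat \<times> nat \<Rightarrow> 'a"
  assumes radius_pos: "r > 0"
    and expansion: "\<forall>x y. norm (x - x0) < r \<and> norm (y - y0) < r \<longrightarrow>
       (\<lambda>(i,j). c (i,j) * (x - x0) ^ i * (y - y0) ^ j) abs_summable_on UNIV \<and>
       ((\<lambda>(i,j). c (i,j) * (x - x0) ^ i * (y - y0) ^ j) has_sum f (x, y)) UNIV"
begin

definition series_term :: "'a \<Rightarrow> 'a \<Rightarrow> nat \<times> nat \<Rightarrow> 'a" where
  "series_term x y \<alpha> = c \<alpha> * (x - x0) ^ fst \<alpha> * (y - y0) ^ snd \<alpha>"

lemma series_term_abs_summable:
  "norm (x - x0) < r \<Longrightarrow> norm (y - y0) < r \<Longrightarrow> series_term x y abs_summable_on UNIV"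
  using expansion unfolding series_term_def by (simp add: case_prod_beta')

lemma series_term_has_sum:
  "norm (x - x0) < r \<Longrightarrow> norm (y - y0) < r \<Longrightarrow> (series_term x y has_sum f (x, y)) UNIV"
  using expansion unfolding series_term_def by (simp add: case_prod_beta')

definition row_sum :: "'a \<Rightarrow> nat \<Rightarrow> 'a" where
  "row_sum t j = (\<Sum>\<^sub>\<infinity>i. c (i, j) * (t - x0) ^ i)"

lemma row_summable:
  assumes "norm (t - x0) < r"
  shows "(\<lambda>i. c (i, j) * (t - x0) ^ i) summable_on UNIV"
proof -
  define \<rho> :: 'a where "\<rho> = of_real (r / 2)"
  have \<rho>: "norm ((y0 + \<rho>) - y0) < r" "\<rho> ^ j \<noteq> 0"
    using radius_pos by (simp_all add: \<rho>_def)
  have "series_term t (y0 + \<rho>) summable_on UNIV"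
    using series_term_has_sum[OF assms \<rho>(1)] summable_on_def by blast
  then have "series_term t (y0 + \<rho>) summable_on range (\<lambda>i. (i, j))"
    by (rule summable_on_subset_banach) simp
  then have "(series_term t (y0 + \<rho>) \<circ> (\<lambda>i. (i, j))) summable_on UNIV"
    by (subst (asm) summable_on_reindex) (auto simp: inj_on_def)
  then have "(\<lambda>i. c (i, j) * (t - x0) ^ i * \<rho> ^ j) summable_on UNIV"
    by (simp add: series_term_def o_def)
  then show ?thesis
    using summable_on_cmult_left'[OF \<rho>(2), of "\<lambda>i. c (i, j) * (t - x0) ^ i" UNIV] by simp
qed

lemma row_sums: "norm (t - x0) < r \<Longrightarrow> (\<lambda>i. c (i, j) * (t - x0) ^ i) sums row_sum t j"
  unfolding row_sum_def by (intro has_sum_imp_sums has_sum_infsum row_summable)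

lemma column_sums:
  assumes "norm (t - x0) < r" "norm (y - y0) < r"
  shows "(\<lambda>j. row_sum t j * (y - y0) ^ j) sums f (t, y)"
proof -
  have "((\<lambda>(j, i). series_term t y (i, j)) has_sum f (t, y)) (UNIV \<times> UNIV)"
    using series_term_has_sum[OF assms] by (subst has_sum_swap [symmetric]) simp
  then have "((\<lambda>(j, i). series_term t y (i, j)) has_sum f (t, y)) (Sigma UNIV (\<lambda>_. UNIV))"
    by simp
  moreover have "((\<lambda>i. (\<lambda>(j, i). series_term t y (i, j)) (j, i)) has_sum (row_sum t j * (y - y0) ^ j)) UNIV"
    for j
    unfolding row_sum_def series_term_def fst_conv snd_conv case_prod_conv
    by (intro has_sum_cmult_left has_sum_infsum row_summable assms(1))
  ultimately have "((\<lambda>j. row_sum t j * (y - y0) ^ j) has_sum f (t, y)) UNIV"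
    by (rule has_sum_SigmaD)
  then show ?thesis
    by (rule has_sum_imp_sums)
qed

lemma pderiv2_eq_coeff: "pderiv2 (p, q) f (x0, y0) = fact p * fact q * c (p, q)"
proof -
  have inner: "(deriv ^^ q) (\<lambda>s. f (t, s)) y0 = fact q * row_sum t q" if "norm (t - x0) < r" for t
    by (rule deriv_funpow_powser_centre[OF radius_pos]) (rule column_sums[OF that])
  have "pderiv2 (p, q) f (x0, y0) = (deriv ^^ p) (\<lambda>t. (deriv ^^ q) (\<lambda>s. f (t, s)) y0) x0"
    by (simp add: pderiv2_def funpow_partial1 funpow_partial2)
  also have "\<dots> = fact p * (fact q * c (p, q))"
  proof (rule deriv_funpow_powser_centre[OF radius_pos])
    fix t assume t: "norm (t - x0) < r"
    have "(\<lambda>i. fact q * (c (i, q) * (t - x0) ^ i)) sums (fact q * row_sum t q)"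
      by (intro sums_mult row_sums t)
    then show "(\<lambda>i. fact q * c (i, q) * (t - x0) ^ i) sums (deriv ^^ q) (\<lambda>s. f (t, s)) y0"
      using inner[OF t] by (simp add: mult.assoc)
  qed
  finally show ?thesis by simp
qed

definition taylor_remainder :: "nat \<Rightarrow> 'a \<Rightarrow> 'a \<Rightarrow> 'a" where
  "taylor_remainder m x y = f (x, y) - sum (series_term x y) (exponents_upto m)"

lemma dominating_series_summable:
  assumes "0 < s" "s < r"
  shows "(\<lambda>\<alpha>. norm (c \<alpha>) * s ^ (fst \<alpha> + snd \<alpha>)) summable_on UNIV"
proof -
  have "norm ((x0 + of_real s) - x0) < r" "norm ((y0 + of_real s) - y0) < r"
    using assms by auto
  then have "(\<lambda>\<alpha>. norm (series_term (x0 + of_real s) (y0 + of_real s) \<alpha>)) summable_on UNIV"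
    by (rule series_term_abs_summable)
  moreover have "norm (series_term (x0 + of_real s) (y0 + of_real s) \<alpha>) = norm (c \<alpha>) * s ^ (fst \<alpha> + snd \<alpha>)"
    for \<alpha>
    using assms by (simp add: series_term_def norm_mult norm_power power_add)
  ultimately show ?thesis
    by simp
qed

lemma norm_series_term_tail_le:
  assumes "0 < s" "0 \<le> \<delta>" "\<delta> \<le> s" "norm (x - x0) \<le> \<delta>" "norm (y - y0) \<le> \<delta>"
    and "\<alpha> \<notin> exponents_upto m"
  shows "norm (series_term x y \<alpha>) \<le> norm (c \<alpha>) * s ^ (fst \<alpha> + snd \<alpha>) * (\<delta> / s) ^ (m + 1)"
proof -
  obtain i j where \<alpha>: "\<alpha> = (i, j)"
    by fastforce
  have "norm (series_term x y \<alpha>) = norm (c \<alpha>) * (norm (x - x0) ^ i * norm (y - y0) ^ j)"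
    by (simp add: \<alpha> series_term_def norm_mult norm_power)
  also have "\<dots> \<le> norm (c \<alpha>) * (\<delta> ^ i * \<delta> ^ j)"
    using assms by (intro mult_left_mono mult_mono power_mono) auto
  also have "\<delta> ^ i * \<delta> ^ j = s ^ (i + j) * (\<delta> / s) ^ (i + j)"
    using assms by (simp add: power_add power_divide)
  also have "norm (c \<alpha>) * (s ^ (i + j) * (\<delta> / s) ^ (i + j)) \<le> norm (c \<alpha>) * (s ^ (i + j) * (\<delta> / s) ^ (m + 1))"
    using assms by (intro mult_left_mono power_decreasing) (auto simp: \<alpha> exponents_upto_def)
  finally show ?thesis
    by (simp add: \<alpha> mult.assoc)
qed

lemma taylor_remainder_le:
  obtains K s where "K \<ge> 0" "s > 0"
    "\<And>x y \<delta>. 0 \<le> \<delta> \<Longrightarrow> \<delta> \<le> s \<Longrightarrow> norm (x - x0) \<le> \<delta> \<Longrightarrow> norm (y - y0) \<le> \<delta> \<Longrightarrow>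
       norm (taylor_remainder m x y) \<le> K * \<delta> ^ (m + 1)"
proof -
  define s where "s = r / 2"
  have s: "0 < s" "s < r"
    using radius_pos by (auto simp: s_def)
  define g where "g = (\<lambda>\<alpha>. norm (c \<alpha>) * s ^ (fst \<alpha> + snd \<alpha>))"
  have g: "g summable_on UNIV" "\<And>\<alpha>. g \<alpha> \<ge> 0"
    using dominating_series_summable[OF s] s by (auto simp: g_def)
  have g_tail: "g summable_on (UNIV - exponents_upto m)"
    by (rule summable_on_subset_banach[OF g(1)]) simp
  define K where "K = (\<Sum>\<^sub>\<infinity>\<alpha>. g \<alpha>) / s ^ (m + 1)"
  show ?thesis
  proof (rule that[of K s])
    show "K \<ge> 0" "s > 0"
      using g(2) s by (simp_all add: K_def infsum_nonneg)
    fix x y \<delta> assume \<delta>: "0 \<le> \<delta>" "\<delta> \<le> s" "norm (x - x0) \<le> \<delta>" "norm (y - y0) \<le> \<delta>"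
    then have xy: "norm (x - x0) < r" "norm (y - y0) < r"
      using s by linarith+
    define e where "e = (\<delta> / s) ^ (m + 1)"
    have "e \<ge> 0"
      using \<delta> s by (simp add: e_def)
    have tail: "(series_term x y has_sum taylor_remainder m x y) (UNIV - exponents_upto m)"
      unfolding taylor_remainder_def
      by (rule has_sum_Diff[OF series_term_has_sum[OF xy]]) (auto simp: finite_exponents_upto)
    have norm_tail: "(\<lambda>\<alpha>. norm (series_term x y \<alpha>)) summable_on (UNIV - exponents_upto m)"
      by (rule summable_on_subset_banach[OF series_term_abs_summable[OF xy]]) auto
    have "norm (taylor_remainder m x y) \<le> (\<Sum>\<^sub>\<infinity>\<alpha>\<in>UNIV - exponents_upto m. norm (series_term x y \<alpha>))"
      by (rule norm_has_sum_bound[OF has_sum_infsum[OF norm_tail] tail])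
    also have "\<dots> \<le> (\<Sum>\<^sub>\<infinity>\<alpha>\<in>UNIV - exponents_upto m. g \<alpha> * e)"
      using norm_series_term_tail_le[OF s(1) \<delta>]
      by (intro infsum_mono norm_tail summable_on_cmult_left g_tail) (simp add: g_def e_def)
    also have "\<dots> = (\<Sum>\<^sub>\<infinity>\<alpha>\<in>UNIV - exponents_upto m. g \<alpha>) * e"
      by (rule infsum_cmult_left')
    also have "\<dots> \<le> (\<Sum>\<^sub>\<infinity>\<alpha>. g \<alpha>) * e"
      using g g_tail \<open>e \<ge> 0\<close> by (intro mult_right_mono infsum_mono_neutral) auto
    also have "\<dots> = K * \<delta> ^ (m + 1)"
      using s by (simp add: K_def e_def power_divide)
    finally show "norm (taylor_remainder m x y) \<le> K * \<delta> ^ (m + 1)" .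
  qed
qed

lemma taylor_remainder_at_nodes_le:
  fixes a :: "nat \<Rightarrow> 'a"
  obtains C d where "d > 0" and "\<And>h. norm h < d \<Longrightarrow>
    norm (\<Sum>i\<le>m. Acoef m i * taylor_remainder m (fst (znode a (x0, y0) i h)) (snd (znode a (x0, y0) i h)))
      \<le> C * norm h ^ (m + 1)"
proof -
  obtain K s where K: "K \<ge> 0" "s > 0" and remainder:
    "\<And>x y \<delta>. 0 \<le> \<delta> \<Longrightarrow> \<delta> \<le> s \<Longrightarrow> norm (x - x0) \<le> \<delta> \<Longrightarrow> norm (y - y0) \<le> \<delta> \<Longrightarrow>
       norm (taylor_remainder m x y) \<le> K * \<delta> ^ (m + 1)"
    using taylor_remainder_le by blast
  obtain B where B: "B > 0" and node:
    "\<And>i h. i \<le> m \<Longrightarrow> norm h \<le> 1 \<Longrightarrow> norm (fst (znode a (x0, y0) i h) - x0) \<le> B * norm h"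
    "\<And>i h. i \<le> m \<Longrightarrow> norm h \<le> 1 \<Longrightarrow> norm (snd (znode a (x0, y0) i h) - y0) \<le> B * norm h"
    using znode_norm_le[of m a "(x0, y0)"] by auto
  show ?thesis
  proof (rule that[of "min 1 (s / B)" "(\<Sum>i\<le>m. norm (Acoef m i :: 'a)) * (K * B ^ (m + 1))"])
    show "min 1 (s / B) > 0"
      using K B by simp
    fix h :: 'a assume h: "norm h < min 1 (s / B)"
    have "norm (\<Sum>i\<le>m. Acoef m i * taylor_remainder m (fst (znode a (x0, y0) i h)) (snd (znode a (x0, y0) i h)))
        \<le> (\<Sum>i\<le>m. norm (Acoef m i :: 'a) * (K * (B * norm h) ^ (m + 1)))"
    proof (rule order_trans[OF norm_sum sum_mono])
      fix i assume "i \<in> {..m}"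
      moreover have "B * norm h \<le> s"
        using h B by (simp add: field_simps)
      ultimately have "norm (taylor_remainder m (fst (znode a (x0, y0) i h)) (snd (znode a (x0, y0) i h)))
          \<le> K * (B * norm h) ^ (m + 1)"
        using h B by (intro remainder node) auto
      then show "norm (Acoef m i * taylor_remainder m (fst (znode a (x0, y0) i h)) (snd (znode a (x0, y0) i h)))
          \<le> norm (Acoef m i :: 'a) * (K * (B * norm h) ^ (m + 1))"
        unfolding norm_mult by (rule mult_left_mono) simp
    qed
    also have "\<dots> = (\<Sum>i\<le>m. norm (Acoef m i :: 'a)) * (K * (B * norm h) ^ (m + 1))"
      by (rule sum_distrib_right [symmetric])
    also have "\<dots> = (\<Sum>i\<le>m. norm (Acoef m i :: 'a)) * (K * B ^ (m + 1)) * norm h ^ (m + 1)"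
      by (simp add: power_mult_distrib mult_ac)
    finally show "norm (\<Sum>i\<le>m. Acoef m i * taylor_remainder m (fst (znode a (x0, y0) i h)) (snd (znode a (x0, y0) i h)))
        \<le> (\<Sum>i\<le>m. norm (Acoef m i :: 'a)) * (K * B ^ (m + 1)) * norm h ^ (m + 1)" .
  qed
qed

lemma taylor_remainder_at_nodes_tendsto:
  fixes a :: "nat \<Rightarrow> 'a"
  shows "((\<lambda>h. (1 / h ^ m) * (\<Sum>i\<le>m. Acoef m i *
             taylor_remainder m (fst (znode a (x0, y0) i h)) (snd (znode a (x0, y0) i h)))) \<longlongrightarrow> 0) (at 0)"
proof -
  define E where "E h = (\<Sum>i\<le>m. Acoef m i *
             taylor_remainder m (fst (znode a (x0, y0) i h)) (snd (znode a (x0, y0) i h)))" for h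
  obtain C d where "d > 0" and bound: "\<And>h. norm h < d \<Longrightarrow> norm (E h) \<le> C * norm h ^ (m + 1)"
    unfolding E_def using taylor_remainder_at_nodes_le by blast
  have "norm ((1 / h ^ m) * E h) \<le> C * norm h" if "h \<noteq> 0" "norm h < d" for h
    using bound[OF that(2)] that(1) by (simp add: norm_mult norm_divide norm_power field_simps)
  moreover have "\<forall>\<^sub>F h in at 0. h \<noteq> 0 \<and> norm h < d"
    unfolding eventually_at using \<open>d > 0\<close> by (intro exI[of _ d]) (auto simp: dist_norm)
  ultimately have "\<forall>\<^sub>F h in at 0. norm ((1 / h ^ m) * E h) \<le> C * norm h"
    by (auto elim: eventually_mono)
  moreover have "((\<lambda>h. C * norm h) \<longlongrightarrow> 0) (at 0)"
    by (intro tendsto_mult_right_zero tendsto_norm_zero tendsto_ident_at)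
  ultimately show ?thesis
    unfolding E_def by (rule Lim_null_comparison)
qed

lemma truncated_series_at_nodes_tendsto:
  fixes a :: "nat \<Rightarrow> 'a"
  shows "((\<lambda>h. (1 / h ^ m) * (\<Sum>i\<le>m. Acoef m i *
             sum (series_term (fst (znode a (x0, y0) i h)) (snd (znode a (x0, y0) i h))) (exponents_upto m)))
          \<longlongrightarrow> (\<Sum>\<alpha>\<in>exponents_upto m.
                 c \<alpha> * (if fst \<alpha> \<le> m then coeff (curve_poly a m ^ snd \<alpha>) (m - fst \<alpha>) else 0))) (at 0)"
proof -
  have "series_term (fst (znode a (x0, y0) i h)) (snd (znode a (x0, y0) i h)) \<alpha>
      = c \<alpha> * (fst (znode a (0, 0) i h) ^ fst \<alpha> * snd (znode a (0, 0) i h) ^ snd \<alpha>)" for i h \<alpha>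
    by (simp add: series_term_def znode_def)
  then have "(\<Sum>i\<le>m. Acoef m i *
             sum (series_term (fst (znode a (x0, y0) i h)) (snd (znode a (x0, y0) i h))) (exponents_upto m))
      = (\<Sum>\<alpha>\<in>exponents_upto m. c \<alpha> * (\<Sum>i\<le>m. Acoef m i *
             (fst (znode a (0, 0) i h) ^ fst \<alpha> * snd (znode a (0, 0) i h) ^ snd \<alpha>)))" for h
    by (simp add: sum_distrib_left algebra_simps) (rule sum.swap)
  then have "(1 / h ^ m) * (\<Sum>i\<le>m. Acoef m i *
             sum (series_term (fst (znode a (x0, y0) i h)) (snd (znode a (x0, y0) i h))) (exponents_upto m))
      = (\<Sum>\<alpha>\<in>exponents_upto m. c \<alpha> * ((1 / h ^ m) * (\<Sum>i\<le>m. Acoef m i *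
             (fst (znode a (0, 0) i h) ^ fst \<alpha> * snd (znode a (0, 0) i h) ^ snd \<alpha>))))" for h
    by (simp add: sum_distrib_left mult.left_commute)
  then show ?thesis
    by (simp only:) (intro tendsto_sum tendsto_mult tendsto_const node_monomial_tendsto)
qed

lemma polyD_Lpoly_eq:
  fixes a :: "nat \<Rightarrow> 'a"
  shows "polyD (Lpoly a m) f (x0, y0) = (\<Sum>\<alpha>\<in>exponents_upto m.
           c \<alpha> * (if fst \<alpha> \<le> m then coeff (curve_poly a m ^ snd \<alpha>) (m - fst \<alpha>) else 0))"
proof -
  have Lpoly: "fact (fst \<alpha>) * fact (snd \<alpha>) * Lpoly a m \<alpha>
      = (if fst \<alpha> \<le> m then coeff (curve_poly a m ^ snd \<alpha>) (m - fst \<alpha>) else 0)" for \<alpha>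
    using fact_mult_Lpoly[of m m "fst \<alpha>" "snd \<alpha>" a] by simp
  have "\<alpha> \<in> exponents_upto m" if "Lpoly a m \<alpha> \<noteq> 0" for \<alpha>
  proof -
    have "fst \<alpha> \<le> m" "coeff (curve_poly a m ^ snd \<alpha>) (m - fst \<alpha>) \<noteq> 0"
      using Lpoly[of \<alpha>] that by (auto split: if_splits)
    moreover from this(2) have "\<not> m - fst \<alpha> < 2 * snd \<alpha>"
      by (metis coeff_curve_poly_power_eq_0)
    ultimately show ?thesis
      by (auto simp: exponents_upto_def)
  qed
  then have "polyD (Lpoly a m) f (x0, y0) = (\<Sum>\<alpha>\<in>exponents_upto m. Lpoly a m \<alpha> * pderiv2 \<alpha> f (x0, y0))"
    unfolding polyD_def by (intro sum.mono_neutral_left finite_exponents_upto) auto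
  also have "\<dots> = (\<Sum>\<alpha>\<in>exponents_upto m.
           c \<alpha> * (if fst \<alpha> \<le> m then coeff (curve_poly a m ^ snd \<alpha>) (m - fst \<alpha>) else 0))"
  proof (intro sum.cong refl)
    fix \<alpha> :: "nat \<times> nat"
    show "Lpoly a m \<alpha> * pderiv2 \<alpha> f (x0, y0)
        = c \<alpha> * (if fst \<alpha> \<le> m then coeff (curve_poly a m ^ snd \<alpha>) (m - fst \<alpha>) else 0)"
      using pderiv2_eq_coeff[of "fst \<alpha>" "snd \<alpha>"] Lpoly[of \<alpha>] by (simp add: algebra_simps)
  qed
  finally show ?thesis .
qed

lemma finite_difference_tendsto_polyD:
  fixes a :: "nat \<Rightarrow> 'a"
  shows "((\<lambda>h. (1 / h ^ m) * (\<Sum>i\<le>m. Acoef m i * f (znode a (x0, y0) i h)))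
           \<longlongrightarrow> polyD (Lpoly a m) f (x0, y0)) (at 0)"
proof -
  have "f (znode a (x0, y0) i h)
      = sum (series_term (fst (znode a (x0, y0) i h)) (snd (znode a (x0, y0) i h))) (exponents_upto m)
        + taylor_remainder m (fst (znode a (x0, y0) i h)) (snd (znode a (x0, y0) i h))" for i h
    by (simp add: taylor_remainder_def)
  then have split: "(1 / h ^ m) * (\<Sum>i\<le>m. Acoef m i * f (znode a (x0, y0) i h))
      = (1 / h ^ m) * (\<Sum>i\<le>m. Acoef m i *
             sum (series_term (fst (znode a (x0, y0) i h)) (snd (znode a (x0, y0) i h))) (exponents_upto m))
        + (1 / h ^ m) * (\<Sum>i\<le>m. Acoef m i *
             taylor_remainder m (fst (znode a (x0, y0) i h)) (snd (znode a (x0, y0) i h)))" for h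
    by (simp add: distrib_left sum.distrib)
  show ?thesis
    unfolding split polyD_Lpoly_eq
    using tendsto_add[OF truncated_series_at_nodes_tendsto taylor_remainder_at_nodes_tendsto] by simp
qed

end

lemma analytic2_at_finite_difference_tendsto:
  fixes f :: "'a::{real_normed_field,banach} \<times> 'a \<Rightarrow> 'a" and a :: "nat \<Rightarrow> 'a"
  assumes "analytic2_at f z0"
  shows "((\<lambda>h. (1 / h ^ m) * (\<Sum>i\<le>m. Acoef m i * f (znode a z0 i h))) \<longlongrightarrow> polyD (Lpoly a m) f z0) (at 0)"
proof -
  obtain r c where "double_power_series f (fst z0) (snd z0) r c"
    using assms unfolding analytic2_at_def double_power_series_def by blast
  then show ?thesis
    using double_power_series.finite_difference_tendsto_polyD by fastforce
qed

theorem theorem11: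
  shows "(\<forall>(n::nat) (a::nat \<Rightarrow> real) (z0::real \<times> real) (f::real \<times> real \<Rightarrow> real) m.
            1 \<le> n \<and> analytic2_at f z0 \<and> m \<le> n \<longrightarrow>
            ((\<lambda>h. (1 / h ^ m) * (\<Sum>i\<le>m. Acoef m i * f (znode a z0 i h)))
               \<longlongrightarrow> polyD (Lpoly a m) f z0) (at 0))
       \<and> (\<forall>(n::nat) (a::nat \<Rightarrow> complex) (z0::complex \<times> complex) (f::complex \<times> complex \<Rightarrow> complex) m.
            1 \<le> n \<and> analytic2_at f z0 \<and> m \<le> n \<longrightarrow>
            ((\<lambda>h. (1 / h ^ m) * (\<Sum>i\<le>m. Acoef m i * f (znode a z0 i h)))
               \<longlongrightarrow> polyD (Lpoly a m) f z0) (at 0))"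
  using analytic2_at_finite_difference_tendsto[where 'a = real]
    analytic2_at_finite_difference_tendsto[where 'a = complex] by blast

end
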